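(* Let $G_1$ and $G_2$ be the local OPERA DAGs held by two honest nodes. Then $G_1$ and $G_2$ are consistent, i.e. for every event $v$ contained in both $G_1$ and $G_2$ we have $G_1[v] = G_2[v]$.
   Context: An OPERA DAG is a finite directed acyclic graph $G=(V,E)$ whose vertices are event blocks (events). Each event contains a list of references to its parent events, given by their cryptographic hashes. The edge $(v_i,v_j)\in E$ means that $v_i$ references $v_j$ as a parent. Cryptographic hashes are assumed secure, so the hash references of an event determine its parents uniquely. An honest node adds a received or created event $v$ to its local OPERA DAG only if it already has all the parents referenced by $v$, and it then adds the edges from $v$ to those parents. For a vertex $v$ of $G$, $G[v]=(V_v,E_v)$ denotes the subgraph of $G$ induced on $V_v$, the set consisting of $v$ and all its ancestors (the vertices reachable from $v$ by following edges). Two OPERA DAGs $G_1,G_2$ are consistent, written $G_1\sim G_2$, if $G_1[v]=G_2[v]$ for every event $v$ contained in both. *)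

theory Defs
  imports Main
begin

(* An OPERA DAG is a pair (V, E) of a set of events and a set of edges;
   (vi, vj) \<in> E means that vi references vj as a parent.
   Every event v carries a list of hash references refs v to its parents;
   hash :: 'e \<Rightarrow> 'h is the cryptographic hash of an event. *)

type_synonym 'e dag = "'e set \<times> ('e \<times> 'e) set"

inductive_set honest_dag :: "('e \<Rightarrow> 'h) \<Rightarrow> ('e \<Rightarrow> 'h list) \<Rightarrow> 'e dag set"
  for hash :: "'e \<Rightarrow> 'h" and refs :: "'e \<Rightarrow> 'h list"
where
  empty: "({}, {}) \<in> honest_dag hash refs"
| add: "\<lbrakk> (V, E) \<in> honest_dag hash refs; v \<notin> V;
          \<forall>r \<in> set (refs v). \<exists>u \<in> V. hash u = r \<rbrakk>
        \<Longrightarrow> (insert v V, E \<union> {(v, u) | u. u \<in> V \<and> hash u \<in> set (refs v)})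
              \<in> honest_dag hash refs"

definition ancestors_of :: "'e dag \<Rightarrow> 'e \<Rightarrow> 'e set" where
  "ancestors_of G v = {u. (v, u) \<in> (snd G)\<^sup>*}"

definition sub_dag :: "'e dag \<Rightarrow> 'e \<Rightarrow> 'e dag" where
  "sub_dag G v = (ancestors_of G v, snd G \<inter> (ancestors_of G v \<times> ancestors_of G v))"

definition consistent :: "'e dag \<Rightarrow> 'e dag \<Rightarrow> bool" where
  "consistent G1 G2 \<longleftrightarrow> (\<forall>v. v \<in> fst G1 \<and> v \<in> fst G2 \<longrightarrow> sub_dag G1 v = sub_dag G2 v)"

end

theory Submission
  imports Defs
begin

(* Since hashes are injective, the parents of an event are determined by the event alone.
   An honest DAG contains all parents of each of its events, and its edges are exactly the
   parent edges between its events. Hence G[v] is the restriction of the global parent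
   relation to the events reachable from v, which does not depend on G. *)

definition parent_rel :: "('e \<Rightarrow> 'h) \<Rightarrow> ('e \<Rightarrow> 'h list) \<Rightarrow> 'e rel" where
  "parent_rel hash refs = {(v, u). hash u \<in> set (refs v)}"

lemma honest_dag_parent_closed_edges:
  assumes "inj hash" and "(V, E) \<in> honest_dag hash refs"
  shows "parent_rel hash refs `` V \<subseteq> V \<and> E = parent_rel hash refs \<inter> V \<times> V"
  using assms(2)
proof (induction rule: honest_dag.induct)
  case empty
  then show ?case by simp
next
  case (add V E v)
  have "u \<in> V" if "(v, u) \<in> parent_rel hash refs" for u
  proof -
    from that add.hyps(3) obtain u' where "u' \<in> V" "hash u' = hash u"
      by (auto simp: parent_rel_def)
    with \<open>inj hash\<close> show "u \<in> V" by (metis injD)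
  qed
  with add.IH show ?case by (auto simp: parent_rel_def)
qed

lemma rtrancl_Int_closed_eq:
  assumes "R `` A \<subseteq> A" and "x \<in> A"
  shows "(x, y) \<in> (R \<inter> A \<times> A)\<^sup>* \<longleftrightarrow> (x, y) \<in> R\<^sup>*"
proof
  show "(x, y) \<in> (R \<inter> A \<times> A)\<^sup>* \<Longrightarrow> (x, y) \<in> R\<^sup>*"
    using rtrancl_mono[of "R \<inter> A \<times> A" R] by blast
next
  assume "(x, y) \<in> R\<^sup>*"
  then have "y \<in> A \<and> (x, y) \<in> (R \<inter> A \<times> A)\<^sup>*"
  proof (induction rule: rtrancl_induct)
    case base
    with \<open>x \<in> A\<close> show ?case by simp
  next
    case (step y z)
    with assms(1) have "z \<in> A" by blast
    with step show ?case by (auto intro: rtrancl_into_rtrancl)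
  qed
  then show "(x, y) \<in> (R \<inter> A \<times> A)\<^sup>*" ..
qed

lemma sub_dag_honest_dag:
  assumes "inj hash" and "G \<in> honest_dag hash refs" and "v \<in> fst G"
  defines "A \<equiv> (parent_rel hash refs)\<^sup>* `` {v}"
  shows "sub_dag G v = (A, parent_rel hash refs \<inter> A \<times> A)"
proof -
  obtain V E where G: "G = (V, E)" by fastforce
  let ?R = "parent_rel hash refs"
  from assms(1,2) have closed: "?R `` V \<subseteq> V" and E: "E = ?R \<inter> V \<times> V"
    using honest_dag_parent_closed_edges G by blast+
  have anc: "ancestors_of G v = A"
    using rtrancl_Int_closed_eq[OF closed] assms(3)
    by (auto simp: ancestors_of_def A_def G E)
  have "A \<subseteq> ?R\<^sup>* `` V"
    using assms(3) by (auto simp: A_def G)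
  also have "\<dots> = V"
    using Image_closed_trancl[OF closed] .
  finally have "A \<subseteq> V" .
  then show ?thesis
    unfolding sub_dag_def anc by (auto simp: G E)
qed

theorem mainTheorem1:
  fixes hash :: "'e \<Rightarrow> 'h" and refs :: "'e \<Rightarrow> 'h list"
    and G1 G2 :: "'e dag"
  assumes "inj hash"
    and "G1 \<in> honest_dag hash refs"
    and "G2 \<in> honest_dag hash refs"
  shows "consistent G1 G2"
  unfolding consistent_def
  using sub_dag_honest_dag[OF assms(1,2)] sub_dag_honest_dag[OF assms(1,3)] by auto

end
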